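(* For every integer $r \ge 2$ there exists an integer $N = N(r)$ such that for every integer $n \ge N$ there exists a graph $G=(V,E)$ with (i) $|V| = 7rn$; (ii) $500(\log r) r^2 n < |E| < 600 (\log r) r^2 n$; (iii) for every two disjoint sets $S, T \subseteq V$ with $|S| = |T| = n$, the number of edges of $G$ with both endpoints in $S \cup T$ and at least one endpoint in $S$ is at most $70 (\log r) n$.
   Context: $\log$ denotes the natural logarithm. *)

theory Defs
  imports Complex_Main
begin

definition simple_graph :: "'a set \<Rightarrow> 'a set set \<Rightarrow> bool" where
  "simple_graph V E \<longleftrightarrow> finite V \<and> (\<forall>e\<in>E. e \<subseteq> V \<and> card e = 2)"

definition edges_touching :: "'a set set \<Rightarrow> 'a set \<Rightarrow> 'a set \<Rightarrow> 'a set set" where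
  "edges_touching E S T = {e \<in> E. e \<subseteq> S \<union> T \<and> e \<inter> S \<noteq> {}}"

end

theory Submission
  imports Defs "HOL-Analysis.Analysis"
begin

text \<open>
  The graph is found by counting m-element edge sets on 7rn vertices, m \<approx> 501 r^2 n ln r.
  For disjoint n-sets S and T, the edges with both ends in S \<union> T that meet S are drawn from a set
  of at most Q0 = 3n^2/2 vertex pairs. An exponential-moment (Chernoff) estimate of the
  hypergeometric tail bounds the number of m-edge sets with more than t = 70 n ln r such edges by
  C(M,m) exp(Q0 (e m/(M - Q0) - m/M) - t), where M = C(7rn,2). There are at most
  C(7rn,n)^2 \<le> (7er)^(2n) pairs (S, T), and for n \<ge> 100r the union of all bad edge sets is
  smaller than the C(M,m) edge sets available.
\<close>

lemma choose_diff_le_pow: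
  assumes "K \<le> N" "i \<le> N"
  shows "real (N - i choose K) \<le> real (N choose K) * (1 - real K / real N) ^ i"
  using assms(2)
proof (induction i)
  case 0
  then show ?case by simp
next
  case (Suc i)
  have N_pos: "N > 0" and i_lt: "i < N"
    using Suc.prems by simp_all
  have ratio_nonneg: "0 \<le> 1 - real K / real N"
    using assms(1) N_pos by (simp add: field_simps)
  have "(N - i - K) * (N - i choose K) = (N - i) * (N - Suc i choose K)"
    using binomial_absorb_comp[of "N - i" K] by simp
  then have absorb: "real (N - i) * real (N - Suc i choose K) = real (N - i - K) * real (N - i choose K)"
    by (metis of_nat_mult)
  have shrink: "real (N - i - K) \<le> real (N - i) * (1 - real K / real N)"
  proof (cases "K \<le> N - i")
    case True
    then have "real (N - i - K) = real N - real i - real K"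
      using i_lt by simp
    moreover have "real (N - i) * (1 - real K / real N) = real N - real i - real K + real i * real K / real N"
      using i_lt N_pos by (simp add: field_simps)
    ultimately show ?thesis by simp
  next
    case False
    then show ?thesis using ratio_nonneg by simp
  qed
  have "real (N - i) * real (N - Suc i choose K)
        \<le> real (N - i) * (1 - real K / real N) * real (N - i choose K)"
    unfolding absorb by (rule mult_right_mono[OF shrink]) simp
  also have "\<dots> \<le> real (N - i) * (1 - real K / real N) * (real (N choose K) * (1 - real K / real N) ^ i)"
    using Suc.IH i_lt ratio_nonneg by (intro mult_left_mono) simp_all
  also have "\<dots> = real (N - i) * (real (N choose K) * (1 - real K / real N) ^ Suc i)"
    by simp
  finally show ?case
    using i_lt by (simp add: mult_le_cancel_left_pos)
qed

lemma choose_diff_diff_le_pow: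
  assumes "c \<ge> 0" "real K \<le> c * real (N - i)" "i \<le> K"
  shows "real (N - i choose (K - i)) \<le> real (N choose K) * c ^ i"
  using assms(2,3)
proof (induction i)
  case 0
  then show ?case by simp
next
  case (Suc i)
  have "c * real (N - Suc i) \<le> c * real (N - i)"
    using assms(1) by (intro mult_left_mono) simp_all
  then have "real K \<le> c * real (N - i)"
    using Suc.prems(1) by linarith
  then have IH: "real (N - i choose (K - i)) \<le> real (N choose K) * c ^ i"
    by (rule Suc.IH[OF _ Suc_leD[OF Suc.prems(2)]])
  have "Suc i < N"
  proof (rule ccontr)
    assume "\<not> Suc i < N"
    then show False using Suc.prems by simp
  qed
  define n' where "n' = N - Suc i"
  define k' where "k' = K - Suc i"
  have n': "N - i = Suc n'" "N - Suc i = n'"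
    using \<open>Suc i < N\<close> unfolding n'_def by simp_all
  have k': "K - i = Suc k'" "K - Suc i = k'"
    using Suc.prems(2) unfolding k'_def by simp_all
  have "Suc k' * (Suc n' choose Suc k') = Suc n' * (n' choose k')"
    using binomial_absorption[of k' "Suc n'"] by simp
  then have "real (Suc n') * real (n' choose k') = real (Suc k') * real (Suc n' choose Suc k')"
    by (metis of_nat_mult)
  also have "\<dots> \<le> real K * real (Suc n' choose Suc k')"
    using Suc.prems(2) k' by (intro mult_right_mono) simp_all
  also have "\<dots> \<le> (c * real n') * (real (N choose K) * c ^ i)"
  proof (rule mult_mono)
    show "real K \<le> c * real n'"
      using Suc.prems(1) n' by simp
    show "real (Suc n' choose Suc k') \<le> real (N choose K) * c ^ i"
      using IH n' k' by simp
  qed (use assms(1) in simp_all)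
  also have "\<dots> \<le> real (Suc n') * (real (N choose K) * c ^ Suc i)"
    using assms(1) by (simp add: algebra_simps mult_right_mono)
  finally show ?case
    using n' k' by simp
qed

lemma choose_diff_diff_le:
  assumes "j \<le> m" "j \<le> q" "q < M" "m \<le> M"
  shows "real (M - q choose (m - j))
    \<le> real (M choose m) * (1 - real m / real M) ^ (q - j) * (real m / real (M - q)) ^ j"
proof -
  define N where "N = M - (q - j)"
  have N_diff: "M - q = N - j"
    unfolding N_def using assms by simp
  have "real m \<le> real m / real (M - q) * real (N - j)"
    using assms(3) N_diff by simp
  then have "real (N - j choose (m - j)) \<le> real (N choose m) * (real m / real (M - q)) ^ j"
    using assms(1) by (intro choose_diff_diff_le_pow) simp_all
  also have "\<dots> \<le> real (M choose m) * (1 - real m / real M) ^ (q - j) * (real m / real (M - q)) ^ j"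
    unfolding N_def using assms by (intro mult_right_mono choose_diff_le_pow) simp_all
  finally show ?thesis
    unfolding N_diff .
qed

lemma power_div_fact_le_exp:
  fixes x :: real
  assumes "0 \<le> x"
  shows "x ^ k / fact k \<le> exp x"
proof -
  have exp_sums: "(\<lambda>i. x ^ i /\<^sub>R fact i) sums exp x"
    by (rule exp_converges)
  have "(\<Sum>i\<in>{k}. x ^ i /\<^sub>R fact i) \<le> (\<Sum>i. x ^ i /\<^sub>R fact i)"
    using assms exp_sums by (intro sum_le_suminf) (auto simp: sums_summable)
  then show ?thesis
    using sums_unique[OF exp_sums] by (simp add: divide_inverse_commute)
qed

lemma binomial_le_exp_pow:
  assumes "k \<ge> 1"
  shows "real (n choose k) \<le> (exp 1 * real n / real k) ^ k"
proof (cases "k \<le> n")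
  case False
  then show ?thesis by (simp add: binomial_eq_0)
next
  case True
  have "fact k * (n choose k) = fact n div fact (n - k)"
    using binomial_fact_lemma[OF True]
    by (metis fact_nonzero nonzero_mult_div_cancel_right mult.commute mult.assoc)
  also have "\<dots> \<le> n ^ k"
    by (rule fact_div_fact_le_pow[OF True])
  finally have "real (fact k * (n choose k)) \<le> real (n ^ k)"
    by (simp only: of_nat_le_iff)
  then have "real (n choose k) \<le> real n ^ k / fact k"
    by (simp add: field_simps)
  also have "\<dots> = (real n / real k) ^ k * (real k ^ k / fact k)"
    using assms by (simp add: power_divide)
  also have "\<dots> \<le> (real n / real k) ^ k * exp (real k)"
    by (intro mult_left_mono power_div_fact_le_exp) simp_all
  also have "\<dots> = (exp 1 * real n / real k) ^ k"
    using exp_of_nat_mult[of k "1::real"] by (simp add: power_mult_distrib power_divide)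
  finally show ?thesis .
qed

definition heavy_subsets :: "'a set \<Rightarrow> nat \<Rightarrow> 'a set \<Rightarrow> real \<Rightarrow> 'a set set" where
  "heavy_subsets P m Q t = {E. E \<subseteq> P \<and> card E = m \<and> t < real (card (E \<inter> Q))}"

lemma card_heavy_subsets_le_sum:
  assumes "finite P" "Q \<subseteq> P"
  shows "card (heavy_subsets P m Q t)
    \<le> (\<Sum>j | j \<le> card Q \<and> j \<le> m \<and> t < real j. (card Q choose j) * (card P - card Q choose (m - j)))"
proof -
  define J where "J = {j. j \<le> card Q \<and> j \<le> m \<and> t < real j}"
  define F where "F j = (\<lambda>(X, Y). X \<union> Y) ` ({X. X \<subseteq> Q \<and> card X = j} \<times> {Y. Y \<subseteq> P - Q \<and> card Y = m - j})"
    for j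
  have fin_Q: "finite Q"
    using assms finite_subset by blast
  have heavy_split: "heavy_subsets P m Q t \<subseteq> (\<Union>j\<in>J. F j)"
  proof
    fix E assume "E \<in> heavy_subsets P m Q t"
    then have E: "E \<subseteq> P" "card E = m" "t < real (card (E \<inter> Q))"
      unfolding heavy_subsets_def by auto
    have fin_E: "finite E"
      using E(1) assms(1) finite_subset by blast
    have "card (E \<inter> Q) \<le> card Q" "card (E \<inter> Q) \<le> m"
      using E(2) fin_E fin_Q by (auto intro: card_mono)
    then have "card (E \<inter> Q) \<in> J"
      unfolding J_def using E(3) by simp
    moreover have "card (E - Q) = m - card (E \<inter> Q)"
      using card_Diff_subset_Int[of E Q] fin_E E(2) by (simp add: Int_commute)
    then have "E \<in> F (card (E \<inter> Q))"
      unfolding F_def using E(1) by (auto intro!: image_eqI[of _ _ "(E \<inter> Q, E - Q)"])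
    ultimately show "E \<in> (\<Union>j\<in>J. F j)"
      by blast
  qed
  have "(\<Union>j\<in>J. F j) \<subseteq> Pow P"
    unfolding F_def using assms(2) by auto
  then have "card (heavy_subsets P m Q t) \<le> card (\<Union>j\<in>J. F j)"
    using assms(1) heavy_split by (intro card_mono) (auto intro: finite_subset)
  also have "\<dots> \<le> (\<Sum>j\<in>J. card (F j))"
    by (rule card_UN_le) (simp add: J_def)
  also have "\<dots> \<le> (\<Sum>j\<in>J. (card Q choose j) * (card P - card Q choose (m - j)))"
  proof (rule sum_mono)
    fix j
    have "card (F j) \<le> card ({X. X \<subseteq> Q \<and> card X = j} \<times> {Y. Y \<subseteq> P - Q \<and> card Y = m - j})"
      unfolding F_def by (rule card_image_le) (use assms fin_Q in simp)
    also have "\<dots> = (card Q choose j) * (card P - card Q choose (m - j))"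
      using assms fin_Q by (simp add: card_cartesian_product n_subsets card_Diff_subset)
    finally show "card (F j) \<le> (card Q choose j) * (card P - card Q choose (m - j))" .
  qed
  finally show ?thesis
    unfolding J_def .
qed

text \<open>Each admissible size j > t of E \<inter> Q is weighted by e^(j - t) \<ge> 1, so that the
  binomial theorem sums the weighted terms.\<close>

lemma card_heavy_subsets_le_binomial_pow:
  assumes "finite P" "Q \<subseteq> P" "card Q < card P" "m \<le> card P"
  defines "a \<equiv> exp 1 * real m / real (card P - card Q)"
    and "d \<equiv> 1 - real m / real (card P)"
  shows "real (card (heavy_subsets P m Q t)) \<le> real (card P choose m) * exp (- t) * (a + d) ^ card Q"
proof -
  define M q C where "M = card P" and "q = card Q" and "C = real (card P choose m)"
  define J where "J = {j. j \<le> q \<and> j \<le> m \<and> t < real j}"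
  have d_nonneg: "d \<ge> 0"
    unfolding d_def using assms(3,4) by (simp add: divide_le_eq_1)
  have a_nonneg: "a \<ge> 0"
    unfolding a_def by simp
  have "real (card (heavy_subsets P m Q t)) \<le> real (\<Sum>j\<in>J. (q choose j) * (M - q choose (m - j)))"
    using card_heavy_subsets_le_sum[OF assms(1,2), of m t]
    unfolding J_def q_def M_def by (simp only: of_nat_le_iff)
  also have "\<dots> = (\<Sum>j\<in>J. real (q choose j) * real (M - q choose (m - j)))"
    by simp
  also have "\<dots> \<le> (\<Sum>j\<in>J. real (q choose j) * (C * exp (- t) * (a ^ j * d ^ (q - j))))"
  proof (intro sum_mono mult_left_mono)
    fix j assume "j \<in> J"
    then have j: "j \<le> q" "j \<le> m" "t < real j"
      unfolding J_def by auto
    have "(real m / real (M - q)) ^ j = exp (- real j) * a ^ j"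
      using exp_of_nat_mult[of j "1::real"]
      by (simp add: a_def M_def q_def exp_minus field_simps)
    also have "\<dots> \<le> exp (- t) * a ^ j"
      using j(3) a_nonneg by (intro mult_right_mono) simp_all
    finally have "C * d ^ (q - j) * (real m / real (M - q)) ^ j \<le> C * d ^ (q - j) * (exp (- t) * a ^ j)"
      using d_nonneg by (intro mult_left_mono) (simp_all add: C_def)
    moreover have "real (M - q choose (m - j)) \<le> C * d ^ (q - j) * (real m / real (M - q)) ^ j"
      unfolding C_def d_def M_def using j assms(3,4) q_def by (intro choose_diff_diff_le) simp_all
    ultimately show "real (M - q choose (m - j)) \<le> C * exp (- t) * (a ^ j * d ^ (q - j))"
      by (simp add: algebra_simps)
  qed simp
  also have "\<dots> = C * exp (- t) * (\<Sum>j\<in>J. real (q choose j) * a ^ j * d ^ (q - j))"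
    by (simp add: sum_distrib_left algebra_simps)
  also have "\<dots> \<le> C * exp (- t) * (\<Sum>j\<le>q. real (q choose j) * a ^ j * d ^ (q - j))"
    using a_nonneg d_nonneg by (intro mult_left_mono sum_mono2) (auto simp: J_def C_def)
  also have "\<dots> = C * exp (- t) * (a + d) ^ q"
    by (simp add: binomial_ring)
  finally show ?thesis
    unfolding C_def q_def .
qed

lemma card_heavy_subsets_exp_bound:
  fixes Q0 :: real
  assumes "finite P" "Q \<subseteq> P" "real (card Q) \<le> Q0" "Q0 < real (card P)" "m \<le> card P"
  shows "real (card (heavy_subsets P m Q t))
    \<le> real (card P choose m) * exp (Q0 * (exp 1 * real m / (real (card P) - Q0) - real m / real (card P)) - t)"
proof -
  define M q where "M = card P" and "q = card Q"
  define y where "y = exp 1 * real m / real (M - q) - real m / real M"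
  define y0 where "y0 = exp 1 * real m / (real M - Q0) - real m / real M"
  have q_lt: "q < M"
    using assms(3,4) unfolding q_def M_def by linarith
  have "real m / real M \<le> real m / real (M - q)"
    using q_lt by (intro divide_left_mono) auto
  also have "\<dots> \<le> exp 1 * real m / real (M - q)"
    using mult_right_mono[of 1 "exp 1" "real m / real (M - q)"] by simp
  finally have y_nonneg: "y \<ge> 0"
    unfolding y_def by simp
  have "exp 1 * real m / real (M - q) \<le> exp 1 * real m / (real M - Q0)"
    using assms(3,4) q_lt unfolding q_def M_def by (intro divide_left_mono) simp_all
  then have "y \<le> y0"
    unfolding y_def y0_def by simp
  then have "real q * y \<le> Q0 * y0"
    using assms(3) y_nonneg unfolding q_def by (intro mult_mono) simp_all
  have "(1 + y) ^ q \<le> exp y ^ q"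
    using y_nonneg by (intro power_mono) simp_all
  also have "\<dots> = exp (real q * y)"
    by (simp add: exp_of_nat_mult)
  also have "\<dots> \<le> exp (Q0 * y0)"
    using \<open>real q * y \<le> Q0 * y0\<close> by simp
  finally have power_bound: "(1 + y) ^ q \<le> exp (Q0 * y0)" .
  have "real (card (heavy_subsets P m Q t)) \<le> real (M choose m) * exp (- t) * (1 + y) ^ q"
    using card_heavy_subsets_le_binomial_pow[OF assms(1,2) _ assms(5), of t] q_lt
    unfolding y_def M_def q_def by (simp add: algebra_simps)
  also have "\<dots> \<le> real (M choose m) * exp (- t) * exp (Q0 * y0)"
    using power_bound by (intro mult_left_mono) simp_all
  also have "\<dots> = real (M choose m) * exp (Q0 * y0 - t)"
    by (simp add: mult.assoc flip: exp_add)
  finally show ?thesis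
    unfolding y0_def M_def .
qed

lemma ex_notin_UN_if_sum_card_less:
  assumes "finite I" "finite X" "\<And>i. i \<in> I \<Longrightarrow> B i \<subseteq> X" "(\<Sum>i\<in>I. card (B i)) < card X"
  shows "\<exists>x\<in>X. \<forall>i\<in>I. x \<notin> B i"
proof (rule ccontr)
  assume "\<not> ?thesis"
  then have "X \<subseteq> (\<Union>i\<in>I. B i)"
    by blast
  then have "card X \<le> card (\<Union>i\<in>I. B i)"
    using assms(1-3) by (intro card_mono) (auto intro: finite_subset)
  also have "\<dots> \<le> (\<Sum>i\<in>I. card (B i))"
    by (rule card_UN_le[OF assms(1)])
  finally show False
    using assms(4) by simp
qed

definition all_edges :: "'a set \<Rightarrow> 'a set set" where
  "all_edges V = {e. e \<subseteq> V \<and> card e = 2}"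

lemma finite_all_edges: "finite V \<Longrightarrow> finite (all_edges V)"
  unfolding all_edges_def by (rule finite_subset[of _ "Pow V"]) auto

lemma card_all_edges: "finite V \<Longrightarrow> card (all_edges V) = card V choose 2"
  unfolding all_edges_def by (rule n_subsets)

lemma real_choose_two: "real (k choose 2) = real k * (real k - 1) / 2"
proof (induction k)
  case 0
  then show ?case by simp
next
  case (Suc k)
  have "Suc k choose 2 = k + (k choose 2)"
    by (simp add: numeral_2_eq_2)
  then show ?case
    using Suc by (simp add: field_simps)
qed

lemma edges_touching_subset_eq: "E \<subseteq> P \<Longrightarrow> edges_touching E S T = E \<inter> edges_touching P S T"
  unfolding edges_touching_def by blast

lemma card_edges_touching_le:
  assumes "\<forall>e\<in>E. card e = 2" "finite S" "finite T" "S \<inter> T = {}" "card S = n" "card T = n"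
  shows "real (card (edges_touching E S T)) \<le> 3 * (real n)^2 / 2"
proof -
  have fin_ST: "finite (S \<union> T)"
    using assms(2,3) by simp
  have sub: "all_edges T \<subseteq> all_edges (S \<union> T)"
    unfolding all_edges_def by blast
  have "edges_touching E S T \<subseteq> all_edges (S \<union> T) - all_edges T"
    using assms(1,4) unfolding edges_touching_def all_edges_def by blast
  then have "card (edges_touching E S T) \<le> card (all_edges (S \<union> T) - all_edges T)"
    using fin_ST by (intro card_mono) (simp_all add: finite_all_edges)
  also have "\<dots> = card (all_edges (S \<union> T)) - card (all_edges T)"
    using assms(3) by (intro card_Diff_subset[OF _ sub]) (simp add: finite_all_edges)
  finally have "card (edges_touching E S T) \<le> card (all_edges (S \<union> T)) - card (all_edges T)" .
  moreover have "card (all_edges (S \<union> T)) = 2 * n choose 2" "card (all_edges T) = n choose 2"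
    using assms fin_ST by (simp_all add: card_all_edges card_Un_disjoint mult_2)
  moreover have "n choose 2 \<le> 2 * n choose 2"
    by (rule binomial_right_mono) simp
  ultimately have "real (card (edges_touching E S T)) \<le> real (2 * n choose 2) - real (n choose 2)"
    by (simp flip: of_nat_le_iff)
  also have "\<dots> \<le> 3 * (real n)^2 / 2"
    unfolding real_choose_two by (simp add: field_simps power2_eq_square)
  finally show ?thesis .
qed

lemma edge_count_bounds:
  fixes r n :: nat
  assumes "r \<ge> 2" "n \<ge> 100 * r"
  defines "M \<equiv> real (7 * r * n) * (real (7 * r * n) - 1) / 2"
    and "Q0 \<equiv> 3 * (real n)^2 / 2"
  shows "241/10 * (real r * real n)^2 \<le> M - Q0" and "M \<le> 49/2 * (real r * real n)^2"
proof -
  define R where "R = real r * real n"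
  have "2 * real n \<le> R"
    unfolding R_def using assms(1) by (intro mult_right_mono) simp_all
  then have n_sq: "4 * (real n)^2 \<le> R^2"
    using power_mono[of "2 * real n" R 2] by (simp add: power_mult_distrib)
  have "real n \<ge> 200"
    using assms by simp
  then have "2 * 200 \<le> R"
    unfolding R_def using assms(1) by (intro mult_mono) simp_all
  then have "140 * R \<le> R^2"
    by (simp add: power2_eq_square mult_right_mono)
  moreover have M_eq: "M = (49 * R^2 - 7 * R) / 2"
    unfolding M_def R_def by (simp add: power2_eq_square algebra_simps)
  ultimately show "241/10 * R^2 \<le> M - Q0" and "M \<le> 49/2 * R^2"
    unfolding Q0_def using n_sq \<open>2 * 200 \<le> R\<close> by simp_all
qed

lemma ln_ge_two_thirds:
  assumes "r \<ge> 2"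
  shows "2/3 \<le> ln (real r)"
proof -
  have "ln 2 \<le> ln (real r)"
    using assms by simp
  then show ?thesis
    using ln2_ge_two_thirds by linarith
qed

lemma ln_7_le: "ln (7::real) \<le> 25/12"
proof -
  have "ln (7::real) \<le> ln 8"
    by simp
  also have "\<dots> = 3 * ln 2"
    using ln_realpow[of "2::real" 3] by simp
  finally show ?thesis
    using ln2_le_25_over_36 by simp
qed

text \<open>The logarithm of C(7rn,n)^2 times the tail bound, for x edges as in the theorem.\<close>

lemma first_moment_exponent_neg:
  fixes r n :: nat and x :: real
  assumes r: "r \<ge> 2" and n: "n \<ge> 100 * r" and x: "0 \<le> x" "x \<le> 501 * ln (real r) * (real r)^2 * real n + 1"
  defines "M \<equiv> real (7 * r * n) * (real (7 * r * n) - 1) / 2"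
    and "Q0 \<equiv> 3 * (real n)^2 / 2"
  shows "2 * real n * ln (7 * exp 1 * real r) + Q0 * (exp 1 * x / (M - Q0) - x / M)
    - 70 * ln (real r) * real n < 0"
proof -
  define R L where "R = real r * real n" and "L = ln (real r)"
  have gap: "241/10 * R^2 \<le> M - Q0" "M \<le> 49/2 * R^2"
    using edge_count_bounds[OF r n] unfolding M_def Q0_def R_def by simp_all
  have R_pos: "R^2 > 0"
    unfolding R_def using r n by simp
  have "Q0 \<ge> 0"
    unfolding Q0_def by simp
  then have M_pos: "M > 0"
    using gap(1) R_pos by linarith
  have "exp 1 / (M - Q0) \<le> (272/100) / (241/10 * R^2)"
    using e_less_272 gap R_pos by (intro frac_le) simp_all
  moreover have "1 / (49/2 * R^2) \<le> 1 / M"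
    using gap R_pos M_pos by (intro divide_left_mono) simp_all
  moreover have "(272/100) / (241/10 * R^2) - 1 / (49/2 * R^2) \<le> 721 / 10000 / R^2"
    using R_pos by (simp add: field_simps)
  ultimately have gap_diff: "exp 1 / (M - Q0) - 1 / M \<le> 721 / 10000 / R^2"
    by linarith
  have r_sq: "(real r)^2 \<ge> 1"
    using r by simp
  have "x / (real r)^2 \<le> (501 * L * (real r)^2 * real n + 1) / (real r)^2"
    using x(2) r_sq unfolding L_def by (intro divide_right_mono) simp_all
  also have "\<dots> \<le> 501 * L * real n + 1"
    using r_sq r by (simp add: add_divide_distrib)
  finally have "x / (real r)^2 \<le> 501 * L * real n + 1" .
  have "Q0 * (exp 1 * x / (M - Q0) - x / M) = Q0 * x * (exp 1 / (M - Q0) - 1 / M)"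
    by (simp add: algebra_simps)
  also have "\<dots> \<le> Q0 * x * (721 / 10000 / R^2)"
    using gap_diff \<open>Q0 \<ge> 0\<close> x(1) by (intro mult_left_mono) simp_all
  also have "\<dots> = 3 * 721 / 20000 * (x / (real r)^2)"
    unfolding Q0_def R_def using n r by (simp add: field_simps)
  also have "\<dots> \<le> 3 * 721 / 20000 * (501 * L * real n + 1)"
    using \<open>x / (real r)^2 \<le> 501 * L * real n + 1\<close> by simp
  also have "\<dots> = 1083663 / 20000 * (L * real n) + 2163 / 20000"
    by simp
  finally have W_bound: "Q0 * (exp 1 * x / (M - Q0) - x / M) \<le> 1083663 / 20000 * (L * real n) + 2163 / 20000" .
  have "2 * real n * ln (7 * exp 1 * real r) = 2 * (real n * ln 7) + 2 * real n + 2 * (L * real n)"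
    unfolding L_def using r by (simp add: ln_mult algebra_simps)
  moreover have "real n * ln 7 \<le> real n * (25/12)"
    using ln_7_le by (intro mult_left_mono) simp_all
  moreover have "2/3 * real n \<le> L * real n"
    unfolding L_def using ln_ge_two_thirds[OF r] by (intro mult_right_mono) simp_all
  ultimately show ?thesis
    using W_bound n r unfolding L_def by linarith
qed

lemma target_edge_count_le:
  fixes r n :: nat
  assumes r: "r \<ge> 2" and n: "n \<ge> 100 * r"
  shows "501 * ln (real r) * (real r)^2 * real n + 1 \<le> 241/10 * (real r * real n)^2"
proof -
  have "ln (real r) \<le> real r"
    using ln_le_minus_one[of "real r"] r by simp
  then have "501 * ln (real r) * (real r)^2 * real n \<le> 501 * (real r ^ 3 * real n)"
    by (simp add: power2_eq_square power3_eq_cube mult_right_mono)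
  moreover have "1 \<le> real r ^ 3 * real n"
    using mult_mono[of 1 "real r ^ 3" 1 "real n"] r n by simp
  moreover have "(real r ^ 2 * real n) * (100 * real r) \<le> (real r ^ 2 * real n) * real n"
    using n by (intro mult_left_mono) simp_all
  then have "100 * (real r ^ 3 * real n) \<le> (real r * real n)^2"
    by (simp add: power2_eq_square power3_eq_cube algebra_simps)
  ultimately show ?thesis
    by linarith
qed

lemma binomial_sq_mult_tail_bound_lt_one:
  fixes r n :: nat and x :: real
  assumes r: "r \<ge> 2" and n: "n \<ge> 100 * r" and x: "0 \<le> x" "x \<le> 501 * ln (real r) * (real r)^2 * real n + 1"
  defines "M \<equiv> real (7 * r * n) * (real (7 * r * n) - 1) / 2"
    and "Q0 \<equiv> 3 * (real n)^2 / 2"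
  shows "real (7 * r * n choose n) ^ 2 * exp (Q0 * (exp 1 * x / (M - Q0) - x / M) - 70 * ln (real r) * real n) < 1"
proof -
  define \<delta> where "\<delta> = Q0 * (exp 1 * x / (M - Q0) - x / M) - 70 * ln (real r) * real n"
  have "real (7 * r * n choose n) \<le> (exp 1 * real (7 * r * n) / real n) ^ n"
    using n r by (intro binomial_le_exp_pow) simp
  also have "\<dots> = exp (real n * ln (7 * exp 1 * real r))"
    using n r by (simp add: exp_of_nat_mult mult.commute mult.left_commute)
  finally have "real (7 * r * n choose n) ^ 2 \<le> exp (real n * ln (7 * exp 1 * real r)) ^ 2"
    by (intro power_mono) simp_all
  also have "\<dots> = exp (2 * real n * ln (7 * exp 1 * real r))"
    by (simp add: power2_eq_square flip: exp_add)
  finally have "real (7 * r * n choose n) ^ 2 * exp \<delta> \<le> exp (2 * real n * ln (7 * exp 1 * real r)) * exp \<delta>"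
    by (rule mult_right_mono) simp
  also have "\<dots> < 1"
    using first_moment_exponent_neg[OF r n x] unfolding \<delta>_def M_def Q0_def by (simp flip: exp_add)
  finally show ?thesis
    unfolding \<delta>_def .
qed

lemma target_edge_count_bounds:
  fixes r n :: nat
  assumes r: "r \<ge> 2" and n: "n \<ge> 100 * r"
  defines "m \<equiv> nat \<lceil>501 * ln (real r) * (real r)^2 * real n\<rceil>"
  shows "real m < 501 * ln (real r) * (real r)^2 * real n + 1"
    and "500 * ln (real r) * (real r)^2 * real n < real m"
    and "real m < 600 * ln (real r) * (real r)^2 * real n"
proof -
  define L where "L = ln (real r)"
  have L_ge: "L \<ge> 2/3"
    unfolding L_def using ln_ge_two_thirds[OF r] .
  have "real m = of_int \<lceil>501 * L * (real r)^2 * real n\<rceil>"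
    unfolding m_def L_def using L_ge[unfolded L_def] by simp
  then have m: "501 * L * (real r)^2 * real n \<le> real m" "real m < 501 * L * (real r)^2 * real n + 1"
    by linarith+
  have "1 \<le> (real r)^2 * real n"
    using mult_mono[of 1 "(real r)^2" 1 "real n"] r n by simp
  then have "1 * 1 \<le> 99 * L * ((real r)^2 * real n)"
    using L_ge by (intro mult_mono) simp_all
  then show "real m < 501 * ln (real r) * (real r)^2 * real n + 1"
    and "500 * ln (real r) * (real r)^2 * real n < real m"
    and "real m < 600 * ln (real r) * (real r)^2 * real n"
    using m L_ge r n unfolding L_def by (simp_all add: algebra_simps)
qed

lemma card_disjoint_pairs_le:
  assumes "finite V"
  shows "finite {(S, T). S \<subseteq> V \<and> T \<subseteq> V \<and> S \<inter> T = {} \<and> card S = n \<and> card T = n}"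
    and "card {(S, T). S \<subseteq> V \<and> T \<subseteq> V \<and> S \<inter> T = {} \<and> card S = n \<and> card T = n}
      \<le> (card V choose n)^2"
proof -
  have sub: "{(S, T). S \<subseteq> V \<and> T \<subseteq> V \<and> S \<inter> T = {} \<and> card S = n \<and> card T = n}
    \<subseteq> {S. S \<subseteq> V \<and> card S = n} \<times> {S. S \<subseteq> V \<and> card S = n}"
    by blast
  moreover have fin: "finite ({S. S \<subseteq> V \<and> card S = n} \<times> {S. S \<subseteq> V \<and> card S = n})"
    using assms by simp
  ultimately show "finite {(S, T). S \<subseteq> V \<and> T \<subseteq> V \<and> S \<inter> T = {} \<and> card S = n \<and> card T = n}"
    by (rule finite_subset)
  show "card {(S, T). S \<subseteq> V \<and> T \<subseteq> V \<and> S \<inter> T = {} \<and> card S = n \<and> card T = n}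
      \<le> (card V choose n)^2"
    using card_mono[OF fin sub] assms by (simp add: card_cartesian_product n_subsets power2_eq_square)
qed

lemma card_heavy_edge_sets_le:
  fixes V :: "'a set" and Q0 t :: real
  defines "M \<equiv> card (all_edges V)"
  assumes "finite V" "S \<subseteq> V" "T \<subseteq> V" "S \<inter> T = {}" "card S = n" "card T = n"
    and "m \<le> M" "3 * (real n)^2 / 2 \<le> Q0" "Q0 < real M"
  shows "real (card (heavy_subsets (all_edges V) m (edges_touching (all_edges V) S T) t))
    \<le> real (M choose m) * exp (Q0 * (exp 1 * real m / (real M - Q0) - real m / real M) - t)"
proof -
  have "real (card (edges_touching (all_edges V) S T)) \<le> 3 * (real n)^2 / 2"
    using assms(2-7) by (intro card_edges_touching_le) (auto simp: all_edges_def intro: finite_subset)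
  then show ?thesis
    unfolding M_def using assms(2,8-10)
    by (intro card_heavy_subsets_exp_bound finite_all_edges) (auto simp: M_def edges_touching_def)
qed

lemma exists_edges_sparse_on_pairs:
  fixes V :: "'a set" and Q0 t :: real
  defines "M \<equiv> card (all_edges V)"
  assumes "finite V" "m \<le> M" "3 * (real n)^2 / 2 \<le> Q0" "Q0 < real M"
    and "real (card V choose n) ^ 2
      * exp (Q0 * (exp 1 * real m / (real M - Q0) - real m / real M) - t) < 1"
  shows "\<exists>E \<subseteq> all_edges V. card E = m \<and>
    (\<forall>S T. S \<subseteq> V \<longrightarrow> T \<subseteq> V \<longrightarrow> S \<inter> T = {} \<longrightarrow> card S = n \<longrightarrow> card T = n \<longrightarrow>
      real (card (edges_touching E S T)) \<le> t)"
proof -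
  define P where "P = all_edges V"
  define X where "X = {E. E \<subseteq> P \<and> card E = m}"
  define Pairs where "Pairs = {(S, T). S \<subseteq> V \<and> T \<subseteq> V \<and> S \<inter> T = {} \<and> card S = n \<and> card T = n}"
  define Bad where "Bad = (\<lambda>(S, T). heavy_subsets P m (edges_touching P S T) t)"
  define \<beta> where "\<beta> = real (M choose m) * exp (Q0 * (exp 1 * real m / (real M - Q0) - real m / real M) - t)"
  have fin_P: "finite P"
    unfolding P_def using assms(2) by (rule finite_all_edges)
  have card_X: "card X = M choose m"
    unfolding X_def M_def P_def using fin_P n_subsets[OF fin_P] P_def by simp
  have bad_le: "real (card (Bad p)) \<le> \<beta>" if "p \<in> Pairs" for p
    using that assms card_heavy_edge_sets_le[of V _ _ n m Q0 t]
    unfolding Pairs_def Bad_def \<beta>_def P_def M_def by auto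
  have "real (\<Sum>p\<in>Pairs. card (Bad p)) \<le> real (card Pairs) * \<beta>"
    using bad_le sum_bounded_above[of Pairs "\<lambda>p. real (card (Bad p))" \<beta>] by simp
  also have "\<dots> \<le> real (card V choose n) ^ 2 * \<beta>"
    using card_disjoint_pairs_le(2)[OF assms(2), of n] \<beta>_def
    unfolding Pairs_def by (intro mult_right_mono) (simp_all flip: of_nat_le_iff)
  also have "\<dots> < real (card X)"
    using assms(6) card_X unfolding \<beta>_def by (simp add: assms(3) mult.left_commute)
  finally have sum_lt: "(\<Sum>p\<in>Pairs. card (Bad p)) < card X"
    by (simp only: of_nat_less_iff)
  have bad_sub: "Bad p \<subseteq> X" for p
    unfolding Bad_def X_def heavy_subsets_def by (auto split: prod.splits)
  have "finite X"
    unfolding X_def using fin_P by (auto intro: finite_subset[of _ "Pow P"])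
  moreover have "finite Pairs"
    unfolding Pairs_def by (rule card_disjoint_pairs_le(1)[OF assms(2)])
  ultimately have "\<exists>E\<in>X. \<forall>p\<in>Pairs. E \<notin> Bad p"
    by (intro ex_notin_UN_if_sum_card_less[OF _ _ _ sum_lt] bad_sub)
  then obtain E where E: "E \<subseteq> P" "card E = m" and good: "\<forall>p\<in>Pairs. E \<notin> Bad p"
    unfolding X_def by blast
  have "real (card (edges_touching E S T)) \<le> t"
    if "S \<subseteq> V" "T \<subseteq> V" "S \<inter> T = {}" "card S = n" "card T = n" for S T
  proof -
    have "(S, T) \<in> Pairs"
      unfolding Pairs_def using that by simp
    then have "\<not> t < real (card (E \<inter> edges_touching P S T))"
      using good E unfolding Bad_def heavy_subsets_def by auto
    then show ?thesis
      using edges_touching_subset_eq[OF E(1)] by simp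
  qed
  then show ?thesis
    using E unfolding P_def by blast
qed

lemma exists_graph:
  fixes r n :: nat
  assumes r: "r \<ge> 2" and n: "n \<ge> 100 * r"
  shows "\<exists>(V::nat set) (E::nat set set).
        simple_graph V E \<and>
        card V = 7 * r * n \<and>
        500 * ln (real r) * (real r)^2 * real n < real (card E) \<and>
        real (card E) < 600 * ln (real r) * (real r)^2 * real n \<and>
        (\<forall>S T. S \<subseteq> V \<longrightarrow> T \<subseteq> V \<longrightarrow> S \<inter> T = {} \<longrightarrow>
               card S = n \<longrightarrow> card T = n \<longrightarrow>
               real (card (edges_touching E S T)) \<le> 70 * ln (real r) * real n)"
proof -
  define V where "V = {..<7 * r * n}"
  define M where "M = card (all_edges V)"
  define m where "m = nat \<lceil>501 * ln (real r) * (real r)^2 * real n\<rceil>"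
  define Q0 where "Q0 = 3 * (real n)^2 / 2"
  note m = target_edge_count_bounds[OF r n, folded m_def]
  have M_eq: "real M = real (7 * r * n) * (real (7 * r * n) - 1) / 2"
    unfolding M_def V_def by (simp add: card_all_edges real_choose_two)
  have gap: "241/10 * (real r * real n)^2 \<le> real M - Q0"
    using edge_count_bounds(1)[OF r n] unfolding M_eq Q0_def .
  moreover have "0 < (real r * real n)^2" "0 \<le> Q0"
    using r n unfolding Q0_def by simp_all
  ultimately have "Q0 < real M" "m \<le> M"
    using m(1) target_edge_count_le[OF r n] by (linarith, simp flip: of_nat_le_iff)
  moreover have "real (card V choose n) ^ 2
      * exp (Q0 * (exp 1 * real m / (real M - Q0) - real m / real M) - 70 * ln (real r) * real n) < 1"
    using binomial_sq_mult_tail_bound_lt_one[OF r n _ less_imp_le[OF m(1)]]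
    unfolding M_eq Q0_def V_def by simp
  ultimately obtain E where E: "E \<subseteq> all_edges V" "card E = m"
    and sparse: "\<forall>S T. S \<subseteq> V \<longrightarrow> T \<subseteq> V \<longrightarrow> S \<inter> T = {} \<longrightarrow> card S = n \<longrightarrow> card T = n \<longrightarrow>
      real (card (edges_touching E S T)) \<le> 70 * ln (real r) * real n"
    using exists_edges_sparse_on_pairs[of V m n Q0 "70 * ln (real r) * real n", folded M_def]
    unfolding Q0_def V_def by auto
  then show ?thesis
    using E sparse m(2,3) unfolding simple_graph_def all_edges_def
    by (intro exI[of _ V] exI[of _ E]) (auto simp: V_def)
qed

theorem proposition2p1:
  "\<forall>r::nat. r \<ge> 2 \<longrightarrow> (\<exists>N::nat. \<forall>n::nat. n \<ge> N \<longrightarrow>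
     (\<exists>(V::nat set) (E::nat set set).
        simple_graph V E \<and>
        card V = 7 * r * n \<and>
        500 * ln (real r) * (real r)^2 * real n < real (card E) \<and>
        real (card E) < 600 * ln (real r) * (real r)^2 * real n \<and>
        (\<forall>S T. S \<subseteq> V \<longrightarrow> T \<subseteq> V \<longrightarrow> S \<inter> T = {} \<longrightarrow>
               card S = n \<longrightarrow> card T = n \<longrightarrow>
               real (card (edges_touching E S T)) \<le> 70 * ln (real r) * real n)))"
  apply (intro allI impI)
  subgoal for r
    by (intro exI[of _ "100 * r"] allI impI exists_graph)
  done

end
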